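(* For any two $X$-trees $T_1$ and $T_2$, one has $\mathbb{M}(T_1)=\mathbb{M}(T_2)$ if and only if $T_1\simeq T_2$.
   Context: Let $X$ be a finite set with $|X|=n\ge 3$. An $X$-tree is a finite tree $T=(V,E)$ whose set of degree-1 vertices is exactly $X$ and which has no vertices of degree $2$; $T_1\simeq T_2$ means there is a graph isomorphism $T_1\to T_2$ fixing every element of $X$. A cord is a $2$-subset $xy$ of $X$. For each cord $xy$, $\lambda^T_{xy}:\mathbb{R}^E\to\mathbb{R}$, $\omega\mapsto\sum_{e\in E(x|y)}\omega(e)$ where $E(x|y)$ is the edge set of the path from $x$ to $y$. $\mathbb{M}(T)$ is the matroid on ground set $\binom{X}{2}$ represented over $\mathbb{R}$ by $xy\mapsto\lambda^T_{xy}$ (i.e. a set of cords is independent iff the corresponding forms are linearly independent). Equality of matroids means equality of their collections of independent sets on the common ground set $\binom{X}{2}$. *)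

theory Defs
  imports Complex_Main
begin

definition is_graph :: "'v set \<Rightarrow> 'v set set \<Rightarrow> bool" where
  "is_graph V E \<longleftrightarrow> finite V \<and> (\<forall>e\<in>E. e \<subseteq> V \<and> card e = 2)"

definition degree :: "'v set set \<Rightarrow> 'v \<Rightarrow> nat" where
  "degree E v = card {e\<in>E. v \<in> e}"

definition is_path :: "'v set \<Rightarrow> 'v set set \<Rightarrow> 'v list \<Rightarrow> bool" where
  "is_path V E p \<longleftrightarrow> p \<noteq> [] \<and> distinct p \<and> set p \<subseteq> V \<and>
     (\<forall>i. Suc i < length p \<longrightarrow> {p ! i, p ! Suc i} \<in> E)"

definition path_edges :: "'v list \<Rightarrow> 'v set set" where
  "path_edges p = {{p ! i, p ! Suc i} | i. Suc i < length p}"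

definition is_tree :: "'v set \<Rightarrow> 'v set set \<Rightarrow> bool" where
  "is_tree V E \<longleftrightarrow> is_graph V E \<and> V \<noteq> {} \<and>
     (\<forall>u\<in>V. \<forall>v\<in>V. \<exists>!p. is_path V E p \<and> hd p = u \<and> last p = v)"

definition is_X_tree :: "'v set \<Rightarrow> 'v set \<Rightarrow> 'v set set \<Rightarrow> bool" where
  "is_X_tree X V E \<longleftrightarrow> is_tree V E \<and> X \<subseteq> V \<and> {v\<in>V. degree E v = 1} = X \<and>
     (\<forall>v\<in>V. degree E v \<noteq> 2)"

definition X_iso :: "'v set \<Rightarrow> 'v set \<Rightarrow> 'v set set \<Rightarrow> 'v set \<Rightarrow> 'v set set \<Rightarrow> bool" where
  "X_iso X V1 E1 V2 E2 \<longleftrightarrow> (\<exists>f. bij_betw f V1 V2 \<and>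
     (\<forall>u\<in>V1. \<forall>v\<in>V1. {u, v} \<in> E1 \<longleftrightarrow> {f u, f v} \<in> E2) \<and> (\<forall>x\<in>X. f x = x))"

definition cords :: "'v set \<Rightarrow> 'v set set" where
  "cords X = {{x, y} | x y. x \<in> X \<and> y \<in> X \<and> x \<noteq> y}"

definition cord_edges :: "'v set \<Rightarrow> 'v set set \<Rightarrow> 'v set \<Rightarrow> 'v set set" where
  "cord_edges V E c = \<Union>{path_edges p | p. is_path V E p \<and> {hd p, last p} = c}"

text \<open>The linear form lambda_c on R^E (weights outside E are irrelevant).\<close>
definition lam :: "'v set \<Rightarrow> 'v set set \<Rightarrow> 'v set \<Rightarrow> ('v set \<Rightarrow> real) \<Rightarrow> real" where
  "lam V E c \<omega> = (\<Sum>e\<in>cord_edges V E c. \<omega> e)"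

definition lin_indep_cords :: "'v set \<Rightarrow> 'v set set \<Rightarrow> 'v set set \<Rightarrow> bool" where
  "lin_indep_cords V E S \<longleftrightarrow> finite S \<and>
     (\<forall>a :: 'v set \<Rightarrow> real. (\<forall>\<omega>. (\<Sum>c\<in>S. a c * lam V E c \<omega>) = 0) \<longrightarrow> (\<forall>c\<in>S. a c = 0))"

definition M_indep :: "'v set \<Rightarrow> 'v set \<Rightarrow> 'v set set \<Rightarrow> 'v set set set" where
  "M_indep X V E = {S. S \<subseteq> cords X \<and> lin_indep_cords V E S}"

end

theory Submission
  imports Defs
begin

text \<open>
  Label each vertex v by the set of leaf pairs (a, b)
  whose path passes through v. These labels are injective, and u, v are adjacent iff no third
  vertex has a label containing the intersection of theirs, so the labels determine the tree up
  to an isomorphism fixing X. Every internal vertex is the median of three leaves x, y, z, and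
  whether that median lies on the path from a to b depends only on which paths between leaves are
  edge-disjoint. Edge-disjointness is visible in the matroid: for distinct leaves a, b, c, d the
  cords ac, bd, ad, bc are dependent iff the paths a-b and c-d share no edge, in which case
  lambda_ac + lambda_bd = lambda_ad + lambda_bc. Conversely an isomorphism fixing X maps paths
  to paths and hence transports every lambda_c.
\<close>

section \<open>Paths, isomorphisms and the forms lambda\<close>

lemma is_path_iff_successively:
  "is_path V E p \<longleftrightarrow> p \<noteq> [] \<and> distinct p \<and> set p \<subseteq> V \<and> successively (\<lambda>x y. {x,y} \<in> E) p"
  unfolding is_path_def successively_conv_nth by simp

lemma is_path_rev: assumes "is_path V E p" shows "is_path V E (rev p)"
proof -
  have swap: "(\<lambda>x y. {y,x} \<in> E) = (\<lambda>x y. {x,y} \<in> E)" by (intro ext) (simp add: insert_commute)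
  show ?thesis using assms unfolding is_path_iff_successively successively_rev swap by simp
qed

lemma is_path_take:
  assumes "is_path V E p" "k < length p" shows "is_path V E (take (Suc k) p)"
proof -
  have "successively (\<lambda>x y. {x,y} \<in> E) (take (Suc k) p @ drop (Suc k) p)"
    using assms(1) unfolding is_path_iff_successively by simp
  then have "successively (\<lambda>x y. {x,y} \<in> E) (take (Suc k) p)"
    unfolding successively_append_iff by blast
  moreover have "take (Suc k) p \<noteq> []" using assms(2) by (cases p) auto
  ultimately show ?thesis
    using assms(1) set_take_subset[of "Suc k" p] unfolding is_path_iff_successively by auto
qed

lemma is_path_drop:
  assumes "is_path V E p" "k < length p" shows "is_path V E (drop k p)"
proof -
  have "successively (\<lambda>x y. {x,y} \<in> E) (take k p @ drop k p)"
    using assms(1) unfolding is_path_iff_successively by simp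
  then show ?thesis
    using assms set_drop_subset[of k p]
    unfolding is_path_iff_successively successively_append_iff by auto
qed

lemma is_path_append:
  assumes "is_path V E p" "is_path V E q" "{last p, hd q} \<in> E" "set p \<inter> set q = {}"
  shows "is_path V E (p @ q)"
  using assms unfolding is_path_iff_successively successively_append_iff by auto

lemma is_path_map:
  assumes "inj_on f V" "f ` V \<subseteq> V'" "\<And>u v. u \<in> V \<Longrightarrow> v \<in> V \<Longrightarrow> {u,v} \<in> E \<Longrightarrow> {f u, f v} \<in> E'"
    and "is_path V E p"
  shows "is_path V' E' (map f p)"
proof -
  have p: "p \<noteq> []" "distinct p" "set p \<subseteq> V" "successively (\<lambda>x y. {x,y} \<in> E) p"
    using assms(4) unfolding is_path_iff_successively by auto
  have "successively (\<lambda>x y. {x,y} \<in> E') (map f p)"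
    unfolding successively_map
  proof (rule successively_mono[OF p(4)])
    fix x y assume "x \<in> set p" "y \<in> set p" "{x,y} \<in> E"
    then show "{f x, f y} \<in> E'" using assms(3) p(3) by blast
  qed
  then show ?thesis
    using p assms(1,2) inj_on_subset unfolding is_path_iff_successively by (auto simp: distinct_map)
qed

lemma path_edges_map: "path_edges (map f p) = image f ` path_edges p"
proof -
  have eq: "{map f p ! i, map f p ! Suc i} = f ` {p ! i, p ! Suc i}" if "Suc i < length p" for i
    using that by simp
  show ?thesis
  proof (rule set_eqI, rule iffI)
    fix e assume "e \<in> path_edges (map f p)"
    then obtain i where "Suc i < length p" "e = {map f p ! i, map f p ! Suc i}"
      unfolding path_edges_def by auto
    then show "e \<in> image f ` path_edges p" unfolding path_edges_def using eq by blast
  next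
    fix e assume "e \<in> image f ` path_edges p"
    then obtain i where "Suc i < length p" "e = f ` {p ! i, p ! Suc i}"
      unfolding path_edges_def by auto
    then show "e \<in> path_edges (map f p)" unfolding path_edges_def using eq[symmetric] by fastforce
  qed
qed

lemma cord_edges_subset_Pow: "cord_edges V E c \<subseteq> Pow V"
  unfolding cord_edges_def path_edges_def is_path_def by fastforce

definition X_isomorphism :: "'v set \<Rightarrow> 'v set \<Rightarrow> 'v set set \<Rightarrow> 'v set \<Rightarrow> 'v set set \<Rightarrow> ('v \<Rightarrow> 'v) \<Rightarrow> bool"
  where "X_isomorphism X V1 E1 V2 E2 f \<longleftrightarrow> bij_betw f V1 V2 \<and>
     (\<forall>u\<in>V1. \<forall>v\<in>V1. {u, v} \<in> E1 \<longleftrightarrow> {f u, f v} \<in> E2) \<and> (\<forall>x\<in>X. f x = x)"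

lemma X_iso_iff: "X_iso X V1 E1 V2 E2 \<longleftrightarrow> (\<exists>f. X_isomorphism X V1 E1 V2 E2 f)"
  unfolding X_iso_def X_isomorphism_def ..

lemma X_isomorphism_inv:
  assumes f: "X_isomorphism X V1 E1 V2 E2 f" and "X \<subseteq> V1"
  shows "X_isomorphism X V2 E2 V1 E1 (inv_into V1 f)"
proof -
  have bij: "bij_betw f V1 V2" and edges: "\<forall>u\<in>V1. \<forall>v\<in>V1. {u,v} \<in> E1 \<longleftrightarrow> {f u, f v} \<in> E2"
    and fX: "\<forall>x\<in>X. f x = x"
    using f unfolding X_isomorphism_def by auto
  have "inv_into V1 f x = x" if "x \<in> X" for x
    using that fX assms(2) bij_betw_inv_into_left[OF bij] by (metis subsetD)
  moreover have "{u,v} \<in> E2 \<longleftrightarrow> {inv_into V1 f u, inv_into V1 f v} \<in> E1" if "u \<in> V2" "v \<in> V2" for u v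
    using that edges bij_betw_inv_into_right[OF bij] bij_betw_apply[OF bij_betw_inv_into[OF bij]]
    by metis
  ultimately show ?thesis
    unfolding X_isomorphism_def using bij_betw_inv_into[OF bij] by blast
qed

lemma cord_edges_image_subset:
  assumes f: "X_isomorphism X V1 E1 V2 E2 f" and "c \<subseteq> X"
  shows "image f ` cord_edges V1 E1 c \<subseteq> cord_edges V2 E2 c"
proof
  fix e' assume "e' \<in> image f ` cord_edges V1 E1 c"
  then obtain p e where p: "is_path V1 E1 p" "{hd p, last p} = c" and e: "e \<in> path_edges p" "e' = f ` e"
    unfolding cord_edges_def by blast
  have bij: "bij_betw f V1 V2"
    using f unfolding X_isomorphism_def by blast
  have fp: "is_path V2 E2 (map f p)"
    using f bij_betw_imp_inj_on[OF bij] bij_betw_imp_surj_on[OF bij]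
    by (intro is_path_map[OF _ _ _ p(1)]) (auto simp: X_isomorphism_def)
  have "p \<noteq> []" using p(1) unfolding is_path_def by simp
  then have "{hd (map f p), last (map f p)} = c"
    using p(2) assms(2) f unfolding X_isomorphism_def by (auto simp: hd_map last_map)
  moreover have "e' \<in> path_edges (map f p)"
    unfolding path_edges_map using e by blast
  ultimately show "e' \<in> cord_edges V2 E2 c"
    unfolding cord_edges_def using fp by blast
qed

lemma lam_X_isomorphism:
  assumes f: "X_isomorphism X V1 E1 V2 E2 f" and "X \<subseteq> V1" "c \<subseteq> X"
  shows "lam V2 E2 c \<omega> = lam V1 E1 c (\<lambda>e. \<omega> (f ` e))"
proof -
  let ?g = "inv_into V1 f"
  have bij: "bij_betw f V1 V2" using f unfolding X_isomorphism_def by blast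
  have inj: "inj_on (image f) (cord_edges V1 E1 c)"
  proof (rule inj_onI)
    fix e e' assume "e \<in> cord_edges V1 E1 c" "e' \<in> cord_edges V1 E1 c" "f ` e = f ` e'"
    then show "e = e'"
      using inj_on_image_eq_iff[OF bij_betw_imp_inj_on[OF bij]] cord_edges_subset_Pow[of V1 E1 c]
      by (metis PowD subsetD)
  qed
  have "e \<in> image f ` cord_edges V1 E1 c" if e: "e \<in> cord_edges V2 E2 c" for e
  proof -
    have "e \<subseteq> V2" using e cord_edges_subset_Pow by blast
    then have "e = f ` ?g ` e"
      unfolding image_image using bij_betw_inv_into_right[OF bij] by (simp add: subset_iff)
    moreover have "?g ` e \<in> cord_edges V1 E1 c"
      using cord_edges_image_subset[OF X_isomorphism_inv[OF f assms(2)] assms(3)] e by blast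
    ultimately show ?thesis by blast
  qed
  then have "cord_edges V2 E2 c = image f ` cord_edges V1 E1 c"
    using cord_edges_image_subset[OF f assms(3)] by blast
  then show ?thesis
    unfolding lam_def by (simp add: sum.reindex[OF inj])
qed

lemma lin_indep_cords_transfer:
  assumes "lin_indep_cords V' E' S" and "\<And>c \<omega>. c \<in> S \<Longrightarrow> lam V' E' c \<omega> = lam V E c (T \<omega>)"
  shows "lin_indep_cords V E S"
  unfolding lin_indep_cords_def
proof (intro conjI allI impI)
  show "finite S" using assms(1) unfolding lin_indep_cords_def by blast
  fix a :: "'a set \<Rightarrow> real" assume dep: "\<forall>\<omega>. (\<Sum>c\<in>S. a c * lam V E c \<omega>) = 0"
  have "(\<Sum>c\<in>S. a c * lam V' E' c \<omega>) = (\<Sum>c\<in>S. a c * lam V E c (T \<omega>))" for \<omega>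
    by (rule sum.cong) (simp_all add: assms(2))
  then have "(\<Sum>c\<in>S. a c * lam V' E' c \<omega>) = 0" for \<omega>
    using dep by simp
  then show "\<forall>c\<in>S. a c = 0" using assms(1) unfolding lin_indep_cords_def by blast
qed

lemma lin_indep_cords_four:
  assumes "distinct [c1, c2, c3, c4]"
  shows "lin_indep_cords V E {c1, c2, c3, c4} \<longleftrightarrow>
    (\<forall>k1 k2 k3 k4 :: real.
       (\<forall>\<omega>. k1 * lam V E c1 \<omega> + k2 * lam V E c2 \<omega> + k3 * lam V E c3 \<omega> + k4 * lam V E c4 \<omega> = 0)
       \<longrightarrow> k1 = 0 \<and> k2 = 0 \<and> k3 = 0 \<and> k4 = 0)"
proof -
  have sum: "(\<Sum>c\<in>{c1, c2, c3, c4}. f c) = f c1 + f c2 + f c3 + f c4" for f :: "'a set \<Rightarrow> real"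
    using assms by (simp add: add.assoc)
  show ?thesis
    unfolding lin_indep_cords_def sum
  proof (intro iffI allI impI conjI ballI)
    fix k1 k2 k3 k4 :: real
    assume indep: "finite {c1, c2, c3, c4} \<and> (\<forall>a. (\<forall>\<omega>. a c1 * lam V E c1 \<omega> + a c2 * lam V E c2 \<omega>
      + a c3 * lam V E c3 \<omega> + a c4 * lam V E c4 \<omega> = 0) \<longrightarrow> (\<forall>c\<in>{c1, c2, c3, c4}. a c = 0))"
      and rel: "\<forall>\<omega>. k1 * lam V E c1 \<omega> + k2 * lam V E c2 \<omega> + k3 * lam V E c3 \<omega> + k4 * lam V E c4 \<omega> = 0"
    define a where "a c = (if c = c1 then k1 else if c = c2 then k2 else if c = c3 then k3 else k4)" for c
    have a: "a c1 = k1" "a c2 = k2" "a c3 = k3" "a c4 = k4" using assms unfolding a_def by auto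
    then have "\<forall>\<omega>. a c1 * lam V E c1 \<omega> + a c2 * lam V E c2 \<omega> + a c3 * lam V E c3 \<omega>
      + a c4 * lam V E c4 \<omega> = 0" using rel by simp
    then have "\<forall>c\<in>{c1, c2, c3, c4}. a c = 0" using indep by blast
    then show "k1 = 0" "k2 = 0" "k3 = 0" "k4 = 0" using a by auto
  next
    fix a :: "'a set \<Rightarrow> real" and c
    assume "\<forall>k1 k2 k3 k4 :: real. (\<forall>\<omega>. k1 * lam V E c1 \<omega> + k2 * lam V E c2 \<omega> + k3 * lam V E c3 \<omega>
        + k4 * lam V E c4 \<omega> = 0) \<longrightarrow> k1 = 0 \<and> k2 = 0 \<and> k3 = 0 \<and> k4 = 0"
      and "\<forall>\<omega>. a c1 * lam V E c1 \<omega> + a c2 * lam V E c2 \<omega> + a c3 * lam V E c3 \<omega> + a c4 * lam V E c4 \<omega> = 0"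
      and "c \<in> {c1, c2, c3, c4}"
    then show "a c = 0" by blast
  qed simp
qed

lemma cords_subset_Pow: "cords X \<subseteq> Pow X"
  unfolding cords_def by blast

lemma M_indep_X_isomorphism_subset:
  assumes f: "X_isomorphism X V1 E1 V2 E2 f" and "X \<subseteq> V1"
  shows "M_indep X V2 E2 \<subseteq> M_indep X V1 E1"
proof
  fix S assume "S \<in> M_indep X V2 E2"
  then have S: "S \<subseteq> cords X" "lin_indep_cords V2 E2 S" unfolding M_indep_def by auto
  have "lam V2 E2 c \<omega> = lam V1 E1 c (\<lambda>e. \<omega> (f ` e))" if "c \<in> S" for c \<omega>
    using lam_X_isomorphism[OF f assms(2)] S(1) cords_subset_Pow that by blast
  then have "lin_indep_cords V1 E1 S" by (rule lin_indep_cords_transfer[OF S(2)])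
  then show "S \<in> M_indep X V1 E1" unfolding M_indep_def using S(1) by blast
qed

lemma M_indep_X_iso:
  assumes "X_iso X V1 E1 V2 E2" "X \<subseteq> V1"
  shows "M_indep X V1 E1 = M_indep X V2 E2"
proof -
  obtain f where f: "X_isomorphism X V1 E1 V2 E2 f"
    using assms(1) unfolding X_iso_iff by blast
  have "X \<subseteq> V2"
  proof
    fix x assume "x \<in> X"
    then have "f x = x" "x \<in> V1" using f assms(2) unfolding X_isomorphism_def by auto
    then show "x \<in> V2" using f bij_betw_apply unfolding X_isomorphism_def by metis
  qed
  show ?thesis
    using M_indep_X_isomorphism_subset[OF f assms(2)]
      M_indep_X_isomorphism_subset[OF X_isomorphism_inv[OF f assms(2)] \<open>X \<subseteq> V2\<close>] by blast
qed

section \<open>Path segments in an X-tree\<close>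

locale X_tree =
  fixes X V :: "'v set" and E :: "'v set set"
  assumes is_X_tree: "is_X_tree X V E" and X_nonempty: "X \<noteq> {}"
    \<comment> \<open>excludes the single isolated vertex, which has degree 0\<close>
begin

lemma finite_V: "finite V"
  using is_X_tree unfolding is_X_tree_def is_tree_def is_graph_def by auto

lemma edgeD: "e \<in> E \<Longrightarrow> e \<subseteq> V \<and> card e = 2"
  using is_X_tree unfolding is_X_tree_def is_tree_def is_graph_def by auto

lemma X_subset_V: "X \<subseteq> V"
  using is_X_tree unfolding is_X_tree_def by auto

lemma leaves_eq: "{v\<in>V. degree E v = 1} = X"
  using is_X_tree unfolding is_X_tree_def by auto

lemma degree_neq_2: "v \<in> V \<Longrightarrow> degree E v \<noteq> 2"
  using is_X_tree unfolding is_X_tree_def by auto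

lemma ex1_path: "u \<in> V \<Longrightarrow> v \<in> V \<Longrightarrow> \<exists>!p. is_path V E p \<and> hd p = u \<and> last p = v"
  using is_X_tree unfolding is_X_tree_def is_tree_def by auto

lemma finite_E: "finite E"
  using edgeD finite_V by (meson Pow_iff finite_Pow_iff finite_subset subsetI)

lemma edgeE:
  assumes "e \<in> E" obtains s t where "e = {s,t}" "s \<noteq> t" "s \<in> V" "t \<in> V"
  using edgeD[OF assms] by (metis card_2_iff insert_subset)

lemma edge_neq: "{u,v} \<in> E \<Longrightarrow> u \<noteq> v"
  using edgeD[of "{u,v}"] by fastforce

lemma edge_vertices: "{u,v} \<in> E \<Longrightarrow> u \<in> V \<and> v \<in> V"
  using edgeD[of "{u,v}"] by auto

definition tree_path :: "'v \<Rightarrow> 'v \<Rightarrow> 'v list" where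
  "tree_path u v = (THE p. is_path V E p \<and> hd p = u \<and> last p = v)"

definition seg :: "'v \<Rightarrow> 'v \<Rightarrow> 'v set" where
  "seg u v = set (tree_path u v)"

lemma tree_path:
  assumes "u \<in> V" "v \<in> V"
  shows "is_path V E (tree_path u v)" "hd (tree_path u v) = u" "last (tree_path u v) = v"
  using theI'[OF ex1_path[OF assms]] unfolding tree_path_def by auto

lemma tree_path_eqI: assumes "is_path V E p" "hd p = u" "last p = v" shows "tree_path u v = p"
proof -
  have ends: "hd p \<in> V" "last p \<in> V" using assms(1) unfolding is_path_def by auto
  show ?thesis using ex1_path[OF ends] tree_path[OF ends] assms by blast
qed

lemma seg_subset: "u \<in> V \<Longrightarrow> v \<in> V \<Longrightarrow> seg u v \<subseteq> V"
  using tree_path unfolding seg_def is_path_def by auto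

lemma ends_in_seg: assumes "u \<in> V" "v \<in> V" shows "u \<in> seg u v" "v \<in> seg u v"
proof -
  have "tree_path u v \<noteq> []" using tree_path(1)[OF assms] unfolding is_path_def by simp
  then show "u \<in> seg u v" "v \<in> seg u v"
    using tree_path(2,3)[OF assms] hd_in_set last_in_set unfolding seg_def by metis+
qed

lemma seg_refl: assumes "u \<in> V" shows "seg u u = {u}"
proof -
  have "tree_path u u = [u]" using assms by (intro tree_path_eqI) (auto simp: is_path_def)
  then show ?thesis unfolding seg_def by simp
qed

lemma seg_commute: assumes "u \<in> V" "v \<in> V" shows "seg v u = seg u v"
proof -
  have ne: "tree_path u v \<noteq> []" using tree_path(1)[OF assms] unfolding is_path_def by simp
  have "tree_path v u = rev (tree_path u v)"
    using is_path_rev tree_path[OF assms] ne by (intro tree_path_eqI) (auto simp: hd_rev last_rev)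
  then show ?thesis unfolding seg_def by simp
qed

lemma tree_path_edge: "{u,v} \<in> E \<Longrightarrow> tree_path u v = [u,v]"
  using edge_neq edge_vertices by (intro tree_path_eqI) (auto simp: is_path_def nth_Cons split: nat.splits)

lemma seg_edge: "{u,v} \<in> E \<Longrightarrow> seg u v = {u,v}"
  using tree_path_edge seg_def by simp

lemma seg_split:
  assumes "u \<in> V" "v \<in> V" "w \<in> seg u v"
  shows "seg u v = seg u w \<union> seg w v" "seg u w \<inter> seg w v = {w}"
proof -
  define p where "p = tree_path u v"
  have p: "is_path V E p" "hd p = u" "last p = v" using tree_path[OF assms(1,2)] p_def by auto
  obtain k where k: "k < length p" "p ! k = w"
    using assms(3) unfolding seg_def p_def[symmetric] by (meson in_set_conv_nth)
  have "hd (take (Suc k) p) = u" using p(2) by (simp add: hd_take)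
  moreover have "last (take (Suc k) p) = w" using k by (simp add: take_Suc_conv_app_nth)
  ultimately
  have "tree_path u w = take (Suc k) p"
    using is_path_take[OF p(1) k(1)] by (intro tree_path_eqI)
  moreover have "tree_path w v = drop k p"
    using is_path_drop[OF p(1) k(1)] p(3) k by (intro tree_path_eqI) (auto simp: hd_drop_conv_nth)
  moreover have "set (take (Suc k) p) = set (take k p) \<union> {w}"
    using k by (simp add: take_Suc_conv_app_nth)
  moreover have "w \<in> set (drop k p)"
    using k by (metis hd_drop_conv_nth hd_in_set drop_eq_Nil not_le)
  moreover have "set (take k p) \<inter> set (drop k p) = {}"
    using p(1) unfolding is_path_def by (metis append_take_drop_id distinct_append)
  moreover have "set p = set (take k p) \<union> set (drop k p)"
    by (metis append_take_drop_id set_append)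
  ultimately show "seg u v = seg u w \<union> seg w v" "seg u w \<inter> seg w v = {w}"
    unfolding seg_def p_def[symmetric] by auto
qed

lemma seg_mono:
  assumes "u \<in> V" "v \<in> V" "w \<in> seg u v" shows "seg u w \<subseteq> seg u v" "seg w v \<subseteq> seg u v"
  using seg_split[OF assms] by auto

lemma first_step:
  assumes "u \<in> V" "v \<in> V" "u \<noteq> v"
  obtains n where "{u,n} \<in> E" "n \<in> seg u v" "n \<noteq> u"
proof -
  define p where "p = tree_path u v"
  have p: "is_path V E p" "hd p = u" "last p = v" using tree_path[OF assms(1,2)] p_def by auto
  have "1 < length p"
  proof (rule ccontr)
    assume "\<not> 1 < length p"
    moreover have "p \<noteq> []" using p unfolding is_path_def by auto
    ultimately obtain x where "p = [x]" by (cases p) auto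
    then show False using p assms(3) by auto
  qed
  moreover have "p ! 0 = u" using p(2) calculation by (cases p) auto
  ultimately have "{u, p!1} \<in> E" "p ! 1 \<noteq> u" "p ! 1 \<in> seg u v"
    using p(1) unfolding is_path_def seg_def p_def[symmetric] by (auto simp: nth_eq_iff_index_eq)
  then show ?thesis using that by blast
qed

lemma seg_join:
  assumes "u \<in> V" "w \<in> V" "v \<in> V" "seg u w \<inter> seg w v = {w}" shows "w \<in> seg u v"
proof (cases "u = w")
  case True
  then show ?thesis using ends_in_seg assms by auto
next
  case False
  define q where "q = tree_path w u"
  have q: "is_path V E q" "hd q = w" "last q = u" using tree_path[OF assms(2,1)] q_def by auto
  have len: "1 < length q"
  proof (rule ccontr)
    assume "\<not> 1 < length q"
    moreover have "q \<noteq> []" using q unfolding is_path_def by auto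
    ultimately obtain x where "q = [x]" by (cases q) auto
    then show False using q False by auto
  qed
  define p where "p = rev (drop 1 q) @ tree_path w v"
  have "is_path V E (rev (drop 1 q))" using q(1) len by (intro is_path_rev is_path_drop)
  moreover have "{last (rev (drop 1 q)), hd (tree_path w v)} \<in> E"
  proof -
    have "{q ! 0, q ! 1} \<in> E" using q(1) len unfolding is_path_def by auto
    moreover have "q ! 0 = w" using q(2) len by (cases q) auto
    moreover have "last (rev (drop 1 q)) = q ! 1" using len by (simp add: last_rev hd_drop_conv_nth)
    ultimately show ?thesis using tree_path(2)[OF assms(2,3)] by (simp add: insert_commute)
  qed
  moreover have "set (drop 1 q) \<subseteq> seg w u - {w}"
    using q(1,2) unfolding seg_def q_def[symmetric] is_path_def by (cases q) auto
  then have "set (rev (drop 1 q)) \<inter> set (tree_path w v) = {}"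
    using assms(4) seg_commute[OF assms(1,2)] unfolding seg_def by auto
  ultimately have "is_path V E p"
    unfolding p_def using tree_path(1)[OF assms(2,3)] by (intro is_path_append)
  moreover have "hd p = u" "last p = v"
    using q(3) len tree_path[OF assms(2,3)] unfolding p_def is_path_def
    by (auto simp: hd_rev last_drop)
  ultimately have "tree_path u v = p" by (rule tree_path_eqI)
  then show ?thesis
    using ends_in_seg(1)[OF assms(2,3)] unfolding seg_def p_def by auto
qed

lemma seg_first_hit:
  assumes "c \<in> V" "a \<in> V" "a \<in> A"
  obtains w where "w \<in> seg c a" "w \<in> A" "seg c w \<inter> A = {w}"
proof -
  obtain w where w: "w \<in> seg c a \<inter> A"
    and min: "\<And>t. t \<in> seg c a \<inter> A \<Longrightarrow> card (seg c w) \<le> card (seg c t)"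
    using ex_has_least_nat[of "\<lambda>t. t \<in> seg c a \<inter> A" a "\<lambda>t. card (seg c t)"]
      ends_in_seg[OF assms(1,2)] assms(3) by blast
  have wV: "w \<in> V" using w seg_subset assms by blast
  have "t = w" if t: "t \<in> seg c w" "t \<in> A" for t
  proof (rule ccontr)
    assume "t \<noteq> w"
    have tV: "t \<in> V" using t seg_subset assms(1) wV by blast
    have "w \<notin> seg c t"
      using seg_split[OF assms(1) wV t(1)] ends_in_seg[OF tV wV] \<open>t \<noteq> w\<close> by auto
    then have "seg c t \<subset> seg c w"
      using seg_mono(1)[OF assms(1) wV t(1)] ends_in_seg(2)[OF assms(1) wV] by blast
    then have "card (seg c t) < card (seg c w)"
      using finite_subset[OF seg_subset[OF assms(1) wV] finite_V] by (rule psubset_card_mono[rotated])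
    moreover have "t \<in> seg c a" using seg_mono(1)[OF assms(1,2)] w t(1) by blast
    ultimately show False using min t(2) by fastforce
  qed
  then show ?thesis using that w ends_in_seg(2)[OF assms(1) wV] by blast
qed

lemma median_exists:
  assumes "a \<in> V" "b \<in> V" "c \<in> V"
  obtains m where "m \<in> seg a b" "m \<in> seg b c" "m \<in> seg a c"
proof -
  obtain w where w: "w \<in> seg c a" "w \<in> seg a b" "seg c w \<inter> seg a b = {w}"
    using seg_first_hit[OF assms(3,1) ends_in_seg(1)[OF assms(1,2)]] by blast
  have wV: "w \<in> V" using w(2) seg_subset assms by blast
  have "seg c w \<inter> seg w b = {w}"
    using w(3) seg_mono(2)[OF assms(1,2) w(2)] ends_in_seg[OF assms(3) wV] ends_in_seg[OF wV assms(2)]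
    by blast
  then have "w \<in> seg c b" by (rule seg_join[OF assms(3) wV assms(2)])
  then show ?thesis
    using that w seg_commute[OF assms(3,2)] seg_commute[OF assms(3,1)] by auto
qed

lemma seg_triangle: assumes "a \<in> V" "b \<in> V" "c \<in> V" shows "seg a c \<subseteq> seg a b \<union> seg b c"
proof -
  obtain m where m: "m \<in> seg a b" "m \<in> seg b c" "m \<in> seg a c" using median_exists[OF assms] .
  show ?thesis
    using seg_split(1)[OF assms(1,3) m(3)] seg_mono(1)[OF assms(1,2) m(1)] seg_mono(2)[OF assms(2,3) m(2)]
    by blast
qed

lemma not_in_seg_trans:
  assumes "a \<in> V" "b \<in> V" "c \<in> V" "w \<notin> seg a b" "w \<notin> seg b c" shows "w \<notin> seg a c"
  using seg_triangle[OF assms(1-3)] assms(4,5) by blast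

lemma not_in_seg_beyond:
  assumes "w \<in> V" "c \<in> V" "t \<in> seg w c" "t \<noteq> w" shows "w \<notin> seg t c"
proof
  assume "w \<in> seg t c"
  moreover have "t \<in> V" using assms(3) seg_subset[OF assms(1,2)] by blast
  ultimately have "w \<in> seg w t \<inter> seg t c" using ends_in_seg(1)[OF assms(1)] by blast
  then show False using seg_split(2)[OF assms(1-3)] assms(4) by simp
qed

lemma seg_subset_seg:
  assumes "a \<in> V" "b \<in> V" "u \<in> seg a b" "v \<in> seg a b" shows "seg u v \<subseteq> seg a b"
proof -
  have uv: "u \<in> V" "v \<in> V" using assms seg_subset by auto
  have "u \<in> seg a v \<or> u \<in> seg v b" using seg_split(1)[OF assms(1,2,4)] assms(3) by auto
  then show ?thesis
  proof
    assume "u \<in> seg a v"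
    then show ?thesis using seg_mono(2)[OF assms(1) uv(2)] seg_mono(1)[OF assms(1,2,4)] by blast
  next
    assume "u \<in> seg v b"
    then show ?thesis
      using seg_mono(1)[OF uv(2) assms(2)] seg_mono(2)[OF assms(1,2,4)] seg_commute[OF uv] by blast
  qed
qed

definition nbrs :: "'v \<Rightarrow> 'v set" where "nbrs v = {n. {v,n} \<in> E}"

lemma nbrsD: "n \<in> nbrs v \<Longrightarrow> n \<in> V \<and> v \<in> V \<and> n \<noteq> v"
  unfolding nbrs_def using edge_vertices edge_neq by auto

lemma finite_nbrs: "finite (nbrs v)"
  using nbrsD finite_V by (meson finite_subset subsetI)

lemma seg_nbr: "n \<in> nbrs v \<Longrightarrow> seg v n = {v,n}"
  unfolding nbrs_def by (simp add: seg_edge)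

lemma degree_eq_card_nbrs: "degree E v = card (nbrs v)"
proof -
  have "bij_betw (\<lambda>n. {v,n}) (nbrs v) {e\<in>E. v \<in> e}"
  proof (rule bij_betwI')
    fix x y assume "x \<in> nbrs v" "y \<in> nbrs v"
    then have "x \<noteq> v" "y \<noteq> v" using nbrsD by auto
    then show "({v, x} = {v, y}) = (x = y)" by (auto simp: doubleton_eq_iff)
  next
    fix e assume e: "e \<in> {e\<in>E. v \<in> e}"
    then obtain s t where "e = {s,t}" using edgeE by blast
    then show "\<exists>x\<in>nbrs v. e = {v, x}"
      using e unfolding nbrs_def by (auto simp: insert_commute)
  qed (auto simp: nbrs_def)
  then show ?thesis unfolding degree_def by (simp add: bij_betw_same_card)
qed

lemma leaf_nbrs: assumes "x \<in> X" obtains n where "nbrs x = {n}"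
  using leaves_eq degree_eq_card_nbrs assms by (auto simp: card_1_singleton_iff)

lemma leaf_in_seg_endpoint:
  assumes "x \<in> X" "a \<in> V" "b \<in> V" "x \<in> seg a b" shows "x = a \<or> x = b"
proof (rule ccontr)
  assume "\<not> (x = a \<or> x = b)"
  have xV: "x \<in> V" using assms X_subset_V by auto
  obtain n1 where n1: "{x,n1} \<in> E" "n1 \<in> seg x a" "n1 \<noteq> x"
    using first_step[OF xV assms(2)] \<open>\<not> (x = a \<or> x = b)\<close> by metis
  obtain n2 where n2: "{x,n2} \<in> E" "n2 \<in> seg x b" "n2 \<noteq> x"
    using first_step[OF xV assms(3)] \<open>\<not> (x = a \<or> x = b)\<close> by metis
  have "n1 \<noteq> n2"
    using n1 n2 seg_split(2)[OF assms(2-4)] seg_commute[OF xV assms(2)] by auto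
  moreover have "n1 \<in> nbrs x" "n2 \<in> nbrs x" using n1 n2 unfolding nbrs_def by auto
  moreover obtain n where "nbrs x = {n}" using leaf_nbrs[OF assms(1)] .
  ultimately show False by auto
qed

lemma three_nbrs:
  assumes "v \<in> V" "v \<notin> X"
  obtains n1 n2 n3 where "n1 \<in> nbrs v" "n2 \<in> nbrs v" "n3 \<in> nbrs v" "distinct [n1, n2, n3]"
proof -
  obtain x where x: "x \<in> X" using X_nonempty by blast
  then have "x \<noteq> v" using assms(2) by blast
  then obtain n where "{v,n} \<in> E" using first_step[OF assms(1), of x] x X_subset_V by blast
  then have "n \<in> nbrs v" unfolding nbrs_def by simp
  then have "card (nbrs v) \<noteq> 0" using finite_nbrs[of v] by auto
  moreover have "card (nbrs v) \<noteq> 1" using leaves_eq assms degree_eq_card_nbrs by auto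
  moreover have "card (nbrs v) \<noteq> 2" using degree_neq_2[OF assms(1)] degree_eq_card_nbrs by simp
  ultimately have "3 \<le> card (nbrs v)" by linarith
  then show ?thesis using that by (auto simp: numeral_3_eq_3 card_le_Suc_iff)
qed

lemma in_seg_nbrs: assumes "n \<in> nbrs u" "n' \<in> nbrs u" "n \<noteq> n'" shows "u \<in> seg n n'"
proof -
  have V: "n \<in> V" "n' \<in> V" "u \<in> V" using nbrsD assms by auto
  obtain m where "m \<in> seg n n'" "m \<in> seg n' u" "m \<in> seg n u" using median_exists[OF V] .
  moreover have "seg n u = {u,n}" "seg n' u = {u,n'}"
    using seg_nbr[OF assms(1)] seg_nbr[OF assms(2)] seg_commute[OF V(3)] V(1,2) by auto
  ultimately show ?thesis using assms(3) by auto
qed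

lemma unique_nbr_toward:
  assumes "n \<in> nbrs u" "n' \<in> nbrs u" "t \<in> V" "u \<notin> seg n t" "u \<notin> seg n' t"
  shows "n = n'"
proof (rule ccontr)
  assume "n \<noteq> n'"
  then have "u \<in> seg n n'" using in_seg_nbrs assms by blast
  moreover have "n \<in> V" "n' \<in> V" using assms nbrsD by auto
  ultimately show False
    using not_in_seg_trans[of n t n' u] assms(3-5) seg_commute[of n' t] by auto
qed

lemma common_first_step:
  assumes "w \<in> V" "a \<in> V" "c \<in> V" "a \<noteq> w" "c \<noteq> w" "w \<notin> seg a c"
  obtains n where "n \<in> nbrs w" "n \<in> seg w a" "n \<in> seg w c"
proof -
  obtain n where n: "{w,n} \<in> E" "n \<in> seg w a" "n \<noteq> w" using first_step[OF assms(1,2) assms(4)[symmetric]] .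
  obtain n' where n': "{w,n'} \<in> E" "n' \<in> seg w c" "n' \<noteq> w" using first_step[OF assms(1,3) assms(5)[symmetric]] .
  have nbr: "n \<in> nbrs w" "n' \<in> nbrs w" using n n' unfolding nbrs_def by auto
  have "n \<in> V" using nbrsD nbr by blast
  have "w \<notin> seg n a" using not_in_seg_beyond[OF assms(1,2) n(2,3)] .
  then have "w \<notin> seg n c" using not_in_seg_trans[OF \<open>n \<in> V\<close> assms(2,3) _ assms(6)] by blast
  moreover have "w \<notin> seg n' c" using not_in_seg_beyond[OF assms(1,3) n'(2,3)] .
  ultimately have "n = n'" using unique_nbr_toward[OF nbr assms(3)] by blast
  then show ?thesis using that nbr n n' by blast
qed

lemma seg_extend_nbr:
  assumes "s \<in> nbrs t" "u \<in> V" "s \<notin> seg u t" shows "seg u s = insert s (seg u t)"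
proof -
  have V: "s \<in> V" "t \<in> V" using nbrsD assms(1) by auto
  obtain m where m: "m \<in> seg u t" "m \<in> seg t s" "m \<in> seg u s" using median_exists[OF assms(2) V(2,1)] .
  have "m = t" using m(1,2) assms(3) seg_nbr[OF assms(1)] by auto
  then have "seg u s = seg u t \<union> seg t s" using seg_split(1)[OF assms(2) V(1)] m(3) by blast
  then show ?thesis using seg_nbr[OF assms(1)] ends_in_seg(2)[OF assms(2) V(2)] by auto
qed

lemma leaf_beyond_nbr:
  assumes "n \<in> nbrs u" obtains a where "a \<in> X" "u \<notin> seg a n"
proof -
  have V: "n \<in> V" "u \<in> V" "n \<noteq> u" using nbrsD[OF assms] by auto
  \<comment> \<open>a vertex beyond n farthest from u has all its neighbours towards u, so it is a leaf\<close>
  let ?B = "{t\<in>V. u \<notin> seg n t}"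
  have "n \<in> ?B" using V seg_refl by auto
  moreover have "\<forall>t. t \<in> ?B \<longrightarrow> card (seg u t) < Suc (card V)"
    using card_mono[OF finite_V seg_subset[OF V(2)]] by (simp add: le_imp_less_Suc)
  ultimately have "\<exists>t. t \<in> ?B \<and> (\<forall>s. s \<in> ?B \<longrightarrow> card (seg u s) \<le> card (seg u t))"
    by (rule ex_has_greatest_nat)
  then obtain t where t: "t \<in> ?B" and tmax: "\<And>s. s \<in> ?B \<Longrightarrow> card (seg u s) \<le> card (seg u t)"
    by blast
  have tV: "t \<in> V" and ut: "u \<notin> seg n t" using t by auto
  have tu: "t \<noteq> u" using ut ends_in_seg(2)[OF V(1) tV] by auto
  have toward_u: "t \<notin> seg s u" if s: "s \<in> nbrs t" for s
  proof -
    have sV: "s \<in> V" "s \<noteq> t" using nbrsD[OF s] by auto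
    have "s \<in> seg u t"
    proof (rule ccontr)
      assume off: "s \<notin> seg u t"
      then have "card (seg u t) < card (seg u s)"
        using seg_extend_nbr[OF s V(2)] finite_subset[OF seg_subset[OF V(2) tV] finite_V] by simp
      moreover have "u \<notin> seg n s"
        using not_in_seg_trans[OF V(1) tV sV(1) ut] seg_nbr[OF s] off ends_in_seg(1)[OF V(2) tV] tu
        by auto
      ultimately show False using tmax sV(1) by fastforce
    qed
    then show ?thesis using not_in_seg_beyond[OF tV V(2) _ sV(2)] seg_commute[OF V(2) tV] by simp
  qed
  obtain p where "{t,p} \<in> E" using first_step[OF tV V(2) tu] by blast
  then have p: "p \<in> nbrs t" unfolding nbrs_def by simp
  have "s = p" if "s \<in> nbrs t" for s
    using unique_nbr_toward[OF that p V(2) toward_u[OF that] toward_u[OF p]] .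
  then have "nbrs t = {p}" using p by blast
  then have "t \<in> X" using leaves_eq degree_eq_card_nbrs tV by auto
  moreover have "u \<notin> seg t n" using ut seg_commute[OF V(1) tV] by simp
  ultimately show ?thesis using that by blast
qed

lemma leaf_beyond:
  assumes "u \<in> V" "v \<in> V" "w \<in> V" obtains a where "a \<in> X" "u \<in> seg a v" "u \<in> seg a w"
proof (cases "u \<in> X")
  case True
  then show ?thesis using that ends_in_seg assms by blast
next
  case False
  obtain n1 n2 n3 where n: "n1 \<in> nbrs u" "n2 \<in> nbrs u" "n3 \<in> nbrs u" "distinct [n1, n2, n3]"
    using three_nbrs[OF assms(1) False] .
  let ?away = "\<lambda>t. {m\<in>nbrs u. u \<notin> seg m t}"
  have away: "card (?away t) \<le> 1" if "t \<in> V" for t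
    using unique_nbr_toward[OF _ _ that] finite_nbrs[of u] by (auto simp: card_le_Suc0_iff_eq)
  have "card (?away v \<union> ?away w) < card {n1, n2, n3}"
    using card_Un_le[of "?away v" "?away w"] away[OF assms(2)] away[OF assms(3)] n(4) by simp
  then have "\<not> {n1, n2, n3} \<subseteq> ?away v \<union> ?away w"
    using card_mono[OF finite_UnI] finite_nbrs by (metis (no_types, lifting) finite_subset mem_Collect_eq not_le subsetI)
  then have "\<exists>n\<in>nbrs u. u \<in> seg n v \<and> u \<in> seg n w" using n(1-3) by blast
  then obtain n where nn: "n \<in> nbrs u" "u \<in> seg n v" "u \<in> seg n w" by blast
  obtain a where a: "a \<in> X" "u \<notin> seg a n" using leaf_beyond_nbr[OF nn(1)] .
  have aV: "a \<in> V" "n \<in> V" using a X_subset_V nn nbrsD by auto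
  have "u \<notin> seg n a" using a(2) seg_commute[OF aV] by simp
  then show ?thesis
    using that a(1) not_in_seg_trans[OF aV(2,1) assms(2)] not_in_seg_trans[OF aV(2,1) assms(3)] nn(2,3)
    by blast
qed

section \<open>Leaf pairs through a vertex\<close>

definition through :: "'v \<Rightarrow> ('v \<times> 'v) set" where
  "through v = {(a,b). a \<in> X \<and> b \<in> X \<and> v \<in> seg a b}"

lemma through_leaf:
  assumes "x \<in> X" shows "through x = {(a,b). a \<in> X \<and> b \<in> X \<and> (x = a \<or> x = b)}"
proof -
  have "x \<in> seg a b \<longleftrightarrow> x = a \<or> x = b" if "a \<in> V" "b \<in> V" for a b
    using leaf_in_seg_endpoint[OF assms that] ends_in_seg[OF that] by blast
  then show ?thesis unfolding through_def using X_subset_V by blast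
qed

lemma in_seg_if_through_subset:
  assumes "u \<in> V" "v \<in> V" "w \<in> V" "u \<noteq> v" "through u \<inter> through v \<subseteq> through w"
  shows "w \<in> seg u v"
proof (rule ccontr)
  assume w: "w \<notin> seg u v"
  have wuv: "w \<noteq> u" "w \<noteq> v" using w ends_in_seg assms(1,2) by auto
  obtain a where a: "a \<in> X" "u \<in> seg a v" "u \<in> seg a w" using leaf_beyond[OF assms(1,2,3)] .
  obtain b where b: "b \<in> X" "v \<in> seg b u" "v \<in> seg b w" using leaf_beyond[OF assms(2,1,3)] .
  have ab: "a \<in> V" "b \<in> V" using a b X_subset_V by auto
  have "u \<notin> seg v b" using not_in_seg_beyond[OF assms(1) ab(2)] b(2) seg_commute ab(2) assms by auto
  then have "u \<in> seg a b"
    using not_in_seg_trans[OF ab assms(2)] a(2) seg_commute[OF ab(2) assms(2)] by auto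
  moreover have "v \<notin> seg u a" using not_in_seg_beyond[OF assms(2) ab(1)] a(2) seg_commute ab(1) assms by auto
  then have "v \<in> seg a b"
    using not_in_seg_trans[OF ab(2,1) assms(1)] b(2) seg_commute ab assms(1) by metis
  moreover have "w \<notin> seg u a" using not_in_seg_beyond[OF assms(3) ab(1)] a(3) seg_commute ab(1) assms wuv by auto
  moreover have "w \<notin> seg v b" using not_in_seg_beyond[OF assms(3) ab(2)] b(3) seg_commute ab(2) assms wuv by auto
  then have "w \<notin> seg u b" using not_in_seg_trans[OF assms(1,2) ab(2) w] by blast
  ultimately have "(a,b) \<in> through u \<inter> through v" "(a,b) \<notin> through w"
    using a(1) b(1) not_in_seg_trans[OF ab(1) assms(1) ab(2)] seg_commute[OF ab(1) assms(1)]
    unfolding through_def by auto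
  then show False using assms(5) by blast
qed

lemma in_seg_iff_through:
  assumes "u \<in> V" "v \<in> V" "w \<in> V" "u \<noteq> v"
  shows "w \<in> seg u v \<longleftrightarrow> through u \<inter> through v \<subseteq> through w"
  using in_seg_if_through_subset[OF assms] seg_subset_seg X_subset_V
  unfolding through_def by blast

lemma through_inj: assumes "u \<in> V" "v \<in> V" "u \<noteq> v" shows "through u \<noteq> through v"
proof -
  obtain a where a: "a \<in> X" "u \<in> seg a v" using leaf_beyond[OF assms(1,2,2)] by blast
  have aV: "a \<in> V" using a X_subset_V by auto
  obtain b where b: "b \<in> X" "u \<in> seg b v" "u \<in> seg b a" using leaf_beyond[OF assms(1,2) aV] .
  have bV: "b \<in> V" using b X_subset_V by auto
  have "v \<notin> seg u a" "v \<notin> seg u b"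
    using not_in_seg_beyond[OF assms(2) aV] not_in_seg_beyond[OF assms(2) bV] a(2) b(2) assms
      seg_commute[OF aV assms(2)] seg_commute[OF bV assms(2)] by auto
  then have "v \<notin> seg a b"
    using not_in_seg_trans[OF aV assms(1) bV] seg_commute[OF aV assms(1)] by auto
  moreover have "u \<in> seg a b" using b(3) seg_commute[OF bV aV] by simp
  ultimately have "(a,b) \<in> through u" "(a,b) \<notin> through v" using a b unfolding through_def by auto
  then show ?thesis by blast
qed

lemma edge_iff_through:
  assumes "u \<in> V" "v \<in> V"
  shows "{u,v} \<in> E \<longleftrightarrow> u \<noteq> v \<and> (\<forall>w\<in>V. through u \<inter> through v \<subseteq> through w \<longrightarrow> w = u \<or> w = v)"
proof
  assume e: "{u,v} \<in> E"
  then show "u \<noteq> v \<and> (\<forall>w\<in>V. through u \<inter> through v \<subseteq> through w \<longrightarrow> w = u \<or> w = v)"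
    using in_seg_iff_through[OF assms] seg_edge edge_neq by blast
next
  assume h: "u \<noteq> v \<and> (\<forall>w\<in>V. through u \<inter> through v \<subseteq> through w \<longrightarrow> w = u \<or> w = v)"
  obtain n where n: "{u,n} \<in> E" "n \<in> seg u v" "n \<noteq> u" using first_step[OF assms] h by blast
  have "n \<in> V" using n(2) seg_subset[OF assms] by blast
  then have "n = v" using in_seg_iff_through[OF assms] n(2,3) h by blast
  then show "{u,v} \<in> E" using n(1) by simp
qed

section \<open>Quartets of cords\<close>

lemma tree_path_no_chord:
  assumes "is_path V E p" "i < j" "j < length p" "{p!i, p!j} \<in> E" shows "j = Suc i"
proof -
  define r where "r = drop i (take (Suc j) p)"
  have "is_path V E r" unfolding r_def using is_path_take[OF assms(1,3)] assms(2,3)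
    by (intro is_path_drop) auto
  moreover have "hd r = p ! i" "last r = p ! j" unfolding r_def using assms(2,3)
    by (simp_all add: hd_drop_conv_nth last_drop take_Suc_conv_app_nth)
  ultimately have "r = [p!i, p!j]" using tree_path_eqI tree_path_edge[OF assms(4)] by metis
  then have "length (drop i (take (Suc j) p)) = 2" unfolding r_def by simp
  then show ?thesis using assms(2,3) by simp
qed

lemma path_edges_tree_path:
  assumes "x \<in> V" "y \<in> V" shows "path_edges (tree_path x y) = {e\<in>E. e \<subseteq> seg x y}"
proof
  define p where "p = tree_path x y"
  have p: "is_path V E p" using tree_path[OF assms] p_def by auto
  show "path_edges (tree_path x y) \<subseteq> {e\<in>E. e \<subseteq> seg x y}"
    using p unfolding path_edges_def seg_def p_def[symmetric] is_path_def by auto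
  show "{e\<in>E. e \<subseteq> seg x y} \<subseteq> path_edges (tree_path x y)"
  proof
    fix e assume e: "e \<in> {e\<in>E. e \<subseteq> seg x y}"
    then obtain s t where st: "e = {s,t}" "s \<noteq> t" by (auto elim: edgeE)
    obtain i j where ij: "i < length p" "j < length p" "p ! i = s" "p ! j = t"
      using e st unfolding seg_def p_def[symmetric] by (auto simp: in_set_conv_nth)
    have "i \<noteq> j" using ij st by auto
    then have "e = {p ! min i j, p ! Suc (min i j)} \<and> Suc (min i j) < length p"
      using tree_path_no_chord[OF p, of i j] tree_path_no_chord[OF p, of j i] ij e st
      by (cases "i < j") (auto simp: insert_commute min_def)
    then show "e \<in> path_edges (tree_path x y)" unfolding path_edges_def p_def[symmetric] by blast
  qed
qed

lemma cord_edges_eq: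
  assumes "x \<in> V" "y \<in> V" shows "cord_edges V E {x,y} = {e\<in>E. e \<subseteq> seg x y}"
proof -
  have "path_edges p = {e\<in>E. e \<subseteq> seg x y}" if "is_path V E p" "{hd p, last p} = {x,y}" for p
  proof -
    have "p = tree_path x y \<or> p = tree_path y x"
      using that tree_path_eqI by (auto simp: doubleton_eq_iff)
    then show ?thesis using path_edges_tree_path assms seg_commute[OF assms] by auto
  qed
  moreover have "is_path V E (tree_path x y) \<and> {hd (tree_path x y), last (tree_path x y)} = {x,y}"
    using tree_path[OF assms] by simp
  ultimately show ?thesis unfolding cord_edges_def by blast
qed

lemma lam_eq:
  assumes "x \<in> V" "y \<in> V" shows "lam V E {x,y} \<omega> = (\<Sum>e\<in>E. if e \<subseteq> seg x y then \<omega> e else 0)"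
  unfolding lam_def cord_edges_eq[OF assms] using finite_E by (simp add: sum.inter_filter)

lemma lam_indicator:
  assumes "x \<in> V" "y \<in> V" "e0 \<in> E"
  shows "lam V E {x,y} (\<lambda>e. if e = e0 then 1 else 0) = (if e0 \<subseteq> seg x y then 1 else 0)"
  unfolding lam_def cord_edges_eq[OF assms(1,2)] using finite_E assms(3) by (simp add: sum.delta)

lemma edge_side:
  assumes "{s,t} \<in> E" "x \<in> V" shows "s \<in> seg x t \<longleftrightarrow> t \<notin> seg x s"
proof -
  have V: "s \<in> V" "t \<in> V" "s \<noteq> t" using edge_vertices edge_neq assms by auto
  obtain m where m: "m \<in> seg x s" "m \<in> seg s t" "m \<in> seg x t" using median_exists[OF assms(2) V(1,2)] .
  then have "s \<in> seg x t \<or> t \<in> seg x s" using seg_edge[OF assms(1)] by auto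
  moreover have "\<not> (s \<in> seg x t \<and> t \<in> seg x s)"
  proof
    assume h: "s \<in> seg x t \<and> t \<in> seg x s"
    then have "t \<in> seg x s \<inter> seg s t" using ends_in_seg(2)[OF V(1,2)] by blast
    then show False using seg_split(2)[OF assms(2) V(2) conjunct1[OF h]] V(3) by auto
  qed
  ultimately show ?thesis by blast
qed

lemma edge_in_seg_if_sides_differ:
  assumes e: "{s,t} \<in> E" and xy: "x \<in> V" "y \<in> V" and "s \<in> seg x t" "s \<notin> seg y t"
  shows "{s,t} \<subseteq> seg x y"
proof -
  have V: "s \<in> V" "t \<in> V" using edge_vertices e by auto
  have "s \<in> seg x y"
    using not_in_seg_trans[OF xy V(2), of s] assms(4,5) by blast
  moreover have "t \<notin> seg x s" "t \<in> seg y s"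
    using edge_side[OF e xy(1)] edge_side[OF e xy(2)] assms(4,5) by auto
  then have "t \<in> seg x y"
    using not_in_seg_trans[OF xy(2,1) V(1), of t] seg_commute[OF xy] by auto
  ultimately show ?thesis by blast
qed

lemma edge_in_seg_iff:
  assumes e: "{s,t} \<in> E" and xy: "x \<in> V" "y \<in> V"
  shows "{s,t} \<subseteq> seg x y \<longleftrightarrow> (s \<in> seg x t \<longleftrightarrow> s \<notin> seg y t)"
proof
  have V: "s \<in> V" "t \<in> V" using edge_vertices e by auto
  assume st: "{s,t} \<subseteq> seg x y"
  have "s \<in> seg x t \<or> s \<in> seg y t"
    using not_in_seg_trans[OF xy(1) V(2) xy(2), of s] seg_commute[OF V(2) xy(2)] st by auto
  moreover have "\<not> (t \<notin> seg x s \<and> t \<notin> seg y s)"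
    using not_in_seg_trans[OF xy(1) V(1) xy(2), of t] seg_commute[OF V(1) xy(2)] st by auto
  ultimately show "s \<in> seg x t \<longleftrightarrow> s \<notin> seg y t"
    using edge_side[OF e xy(1)] edge_side[OF e xy(2)] by blast
next
  assume "s \<in> seg x t \<longleftrightarrow> s \<notin> seg y t"
  then show "{s,t} \<subseteq> seg x y"
    using edge_in_seg_if_sides_differ[OF e xy] edge_in_seg_if_sides_differ[OF e xy(2,1)] seg_commute[OF xy]
    by auto
qed

definition disjoint_paths :: "'v \<Rightarrow> 'v \<Rightarrow> 'v \<Rightarrow> 'v \<Rightarrow> bool" where
  "disjoint_paths a b c d \<longleftrightarrow> (\<forall>e\<in>E. \<not> (e \<subseteq> seg a b \<and> e \<subseteq> seg c d))"

lemma quartet_relation: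
  assumes "a \<in> V" "b \<in> V" "c \<in> V" "d \<in> V" "disjoint_paths a b c d"
  shows "lam V E {a,c} \<omega> + lam V E {b,d} \<omega> = lam V E {a,d} \<omega> + lam V E {b,c} \<omega>"
proof -
  have "(if e \<subseteq> seg a c then \<omega> e else 0) + (if e \<subseteq> seg b d then \<omega> e else 0)
      = (if e \<subseteq> seg a d then \<omega> e else 0) + (if e \<subseteq> seg b c then \<omega> e else 0)" if e: "e \<in> E" for e
  proof -
    obtain s t where st: "e = {s,t}" using edgeE[OF e] by blast
    then have "{s,t} \<in> E" using e by simp
    moreover have "\<not> ({s,t} \<subseteq> seg a b \<and> {s,t} \<subseteq> seg c d)"
      using assms(5) e st unfolding disjoint_paths_def by blast
    ultimately show ?thesis
      unfolding st using edge_in_seg_iff assms(1-4) by auto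
  qed
  then show ?thesis
    unfolding lam_eq[OF assms(1,3)] lam_eq[OF assms(2,4)] lam_eq[OF assms(1,4)] lam_eq[OF assms(2,3)]
    by (simp add: sum.distrib[symmetric])
qed

lemma lam_pendant:
  assumes "x \<in> X" "nbrs x = {n}" "y \<in> X" "z \<in> X" "y \<noteq> z"
  shows "lam V E {y,z} (\<lambda>e. if e = {x,n} then 1 else 0) = (if x = y \<or> x = z then 1 else 0)"
proof -
  have V: "y \<in> V" "z \<in> V" "x \<in> V" using assms X_subset_V by auto
  have "{x,n} \<subseteq> seg x w" if w: "w \<in> V" "w \<noteq> x" for w
  proof -
    obtain m where m: "{x,m} \<in> E" "m \<in> seg x w" using first_step[OF V(3) w(1)] w(2) by metis
    then have "m = n" using assms(2) unfolding nbrs_def by blast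
    then show ?thesis using m ends_in_seg[OF V(3) w(1)] by blast
  qed
  then have "{x,n} \<subseteq> seg y z \<longleftrightarrow> x = y \<or> x = z"
    using leaf_in_seg_endpoint[OF assms(1) V(1,2)] seg_commute[OF V(1,2)] V assms(5) by auto
  moreover have "{x,n} \<in> E" using assms(2) unfolding nbrs_def by auto
  ultimately show ?thesis using lam_indicator[OF V(1,2)] by simp
qed

lemma distinct_quartet_cords:
  "distinct [a,b,c,d] \<Longrightarrow> distinct [{a,c},{b,d},{a,d},{b,c}]"
  by (auto simp: doubleton_eq_iff)

text \<open>Test vectors: the pendant edges at a, b, c, d and an edge shared by the paths a-b and c-d.\<close>

lemma quartet_coefficients_vanish:
  assumes X4: "a \<in> X" "b \<in> X" "c \<in> X" "d \<in> X" and dist: "distinct [a,b,c,d]"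
    and "\<not> disjoint_paths a b c d"
    and rel: "\<forall>\<omega>. k1 * lam V E {a,c} \<omega> + k2 * lam V E {b,d} \<omega> + k3 * lam V E {a,d} \<omega>
       + k4 * lam V E {b,c} \<omega> = 0"
  shows "k1 = 0 \<and> k2 = 0 \<and> k3 = 0 \<and> k4 = 0"
proof -
  have V: "a \<in> V" "b \<in> V" "c \<in> V" "d \<in> V" using X4 X_subset_V by auto
  obtain na nb nc nd where n: "nbrs a = {na}" "nbrs b = {nb}" "nbrs c = {nc}" "nbrs d = {nd}"
    using leaf_nbrs X4 by metis
  note pendant_values = lam_pendant[OF X4(1) n(1)] lam_pendant[OF X4(2) n(2)]
    lam_pendant[OF X4(3) n(3)] lam_pendant[OF X4(4) n(4)]
  have dd: "b \<noteq> a" "c \<noteq> a" "d \<noteq> a" "c \<noteq> b" "d \<noteq> b" "d \<noteq> c" using dist by auto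
  have pendant_eqs: "k1 + k3 = 0" "k2 + k4 = 0" "k1 + k4 = 0" "k2 + k3 = 0"
    using rel[rule_format, of "\<lambda>e. if e = {a,na} then 1 else 0"]
      rel[rule_format, of "\<lambda>e. if e = {b,nb} then 1 else 0"]
      rel[rule_format, of "\<lambda>e. if e = {c,nc} then 1 else 0"]
      rel[rule_format, of "\<lambda>e. if e = {d,nd} then 1 else 0"] X4 dist dd
    by (simp_all add: pendant_values)
  obtain e where e: "e \<in> E" "e \<subseteq> seg a b" "e \<subseteq> seg c d"
    using assms(6) unfolding disjoint_paths_def by blast
  obtain s t where st: "e = {s,t}" using edgeE[OF e(1)] by blast
  have eE: "{s,t} \<in> E" using e st by simp
  have "k1 * (if s \<in> seg a t \<longleftrightarrow> s \<notin> seg c t then 1 else 0)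
      + k2 * (if s \<in> seg b t \<longleftrightarrow> s \<notin> seg d t then 1 else 0)
      + k3 * (if s \<in> seg a t \<longleftrightarrow> s \<notin> seg d t then 1 else 0)
      + k4 * (if s \<in> seg b t \<longleftrightarrow> s \<notin> seg c t then 1 else 0) = 0"
    using rel[rule_format, of "\<lambda>e'. if e' = {s,t} then 1 else 0"]
    unfolding lam_indicator[OF V(1,3) eE] lam_indicator[OF V(2,4) eE] lam_indicator[OF V(1,4) eE]
      lam_indicator[OF V(2,3) eE] edge_in_seg_iff[OF eE V(1,3)] edge_in_seg_iff[OF eE V(2,4)]
      edge_in_seg_iff[OF eE V(1,4)] edge_in_seg_iff[OF eE V(2,3)] .
  moreover have "s \<in> seg a t \<longleftrightarrow> s \<notin> seg b t" "s \<in> seg c t \<longleftrightarrow> s \<notin> seg d t"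
    using e st edge_in_seg_iff[OF eE V(1,2)] edge_in_seg_iff[OF eE V(3,4)] by auto
  ultimately show ?thesis using pendant_eqs by (cases "s \<in> seg a t"; cases "s \<in> seg c t") auto
qed

lemma quartet_indep_iff:
  assumes X4: "a \<in> X" "b \<in> X" "c \<in> X" "d \<in> X" and dist: "distinct [a,b,c,d]"
  shows "lin_indep_cords V E {{a,c},{b,d},{a,d},{b,c}} \<longleftrightarrow> \<not> disjoint_paths a b c d"
  unfolding lin_indep_cords_four[OF distinct_quartet_cords[OF dist]]
proof (intro iffI notI allI impI)
  have V: "a \<in> V" "b \<in> V" "c \<in> V" "d \<in> V" using X4 X_subset_V by auto
  assume indep: "\<forall>k1 k2 k3 k4 :: real. (\<forall>\<omega>. k1 * lam V E {a,c} \<omega> + k2 * lam V E {b,d} \<omega>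
    + k3 * lam V E {a,d} \<omega> + k4 * lam V E {b,c} \<omega> = 0) \<longrightarrow> k1 = 0 \<and> k2 = 0 \<and> k3 = 0 \<and> k4 = 0"
  assume "disjoint_paths a b c d"
  then have "\<forall>\<omega>. 1 * lam V E {a,c} \<omega> + 1 * lam V E {b,d} \<omega> + (-1) * lam V E {a,d} \<omega>
       + (-1) * lam V E {b,c} \<omega> = 0"
    using quartet_relation[OF V] by simp
  then show False using indep by fastforce
qed (use quartet_coefficients_vanish[OF assms] in blast)

section \<open>Medians\<close>

definition median :: "'v \<Rightarrow> 'v \<Rightarrow> 'v \<Rightarrow> 'v \<Rightarrow> bool" where
  "median w x y z \<longleftrightarrow> w \<in> seg x y \<and> w \<in> seg y z \<and> w \<in> seg x z"

lemma median_not_leaf: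
  assumes "x \<in> X" "y \<in> X" "z \<in> X" "distinct [x,y,z]" "median w x y z" shows "w \<notin> X"
  using leaf_in_seg_endpoint[of w x y] leaf_in_seg_endpoint[of w y z] leaf_in_seg_endpoint[of w x z]
    assms X_subset_V unfolding median_def by auto

lemma median_in_seg:
  assumes "x \<in> V" "y \<in> V" "z \<in> V" "median w x y z" "p \<in> {x,y,z}" "q \<in> {x,y,z}" "p \<noteq> q"
  shows "w \<in> seg p q"
  using assms seg_commute unfolding median_def by auto

lemma median_on_two_paths:
  assumes "x \<in> V" "y \<in> V" "z \<in> V" "distinct [x,y,z]" "median w x y z" "a \<in> V"
  obtains p q where "p \<in> {x,y,z}" "q \<in> {x,y,z}" "p \<noteq> q" "w \<in> seg a p" "w \<in> seg a q"
proof -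
  have either: "w \<in> seg a c \<or> w \<in> seg a d" if "c \<in> {x,y,z}" "d \<in> {x,y,z}" "c \<noteq> d" for c d
    using not_in_seg_trans[of c a d w] median_in_seg[OF assms(1-3,5) that] seg_commute[of a c] that assms
    by auto
  show ?thesis using either[of x y] either[of x z] either[of y z] assms(4) that by auto
qed

lemma internal_vertex_median:
  assumes "v \<in> V" "v \<notin> X"
  obtains x y z where "x \<in> X" "y \<in> X" "z \<in> X" "distinct [x,y,z]" "median v x y z"
proof -
  obtain n1 n2 n3 where n: "n1 \<in> nbrs v" "n2 \<in> nbrs v" "n3 \<in> nbrs v" "distinct [n1, n2, n3]"
    using three_nbrs[OF assms] .
  obtain a1 where a1: "a1 \<in> X" "v \<notin> seg a1 n1" using leaf_beyond_nbr[OF n(1)] .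
  obtain a2 where a2: "a2 \<in> X" "v \<notin> seg a2 n2" using leaf_beyond_nbr[OF n(2)] .
  obtain a3 where a3: "a3 \<in> X" "v \<notin> seg a3 n3" using leaf_beyond_nbr[OF n(3)] .
  have sep: "v \<in> seg a a'" if "a \<in> X" "a' \<in> X" "m \<in> nbrs v" "m' \<in> nbrs v" "m \<noteq> m'"
    "v \<notin> seg a m" "v \<notin> seg a' m'" for a a' m m'
  proof (rule ccontr)
    assume "v \<notin> seg a a'"
    moreover have V: "a \<in> V" "a' \<in> V" "m \<in> V" "m' \<in> V" using that X_subset_V nbrsD by auto
    ultimately have "v \<notin> seg m m'"
      using not_in_seg_trans[OF V(3,1,2)] not_in_seg_trans[OF V(3,2,4)] that(6,7) seg_commute[OF V(1,3)]
      by auto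
    then show False using in_seg_nbrs that(3-5) by blast
  qed
  have "v \<in> seg a1 a2" "v \<in> seg a2 a3" "v \<in> seg a1 a3"
    using sep[OF a1(1) a2(1) n(1,2) _ a1(2) a2(2)] sep[OF a2(1) a3(1) n(2,3) _ a2(2) a3(2)]
      sep[OF a1(1) a3(1) n(1,3) _ a1(2) a3(2)] n(4) by auto
  moreover have "a \<noteq> a'" if "a \<in> X" "v \<in> seg a a'" for a a'
    using that seg_refl X_subset_V assms(2) by auto
  ultimately show ?thesis using that a1 a2 a3 unfolding median_def by auto
qed

lemma not_in_seg_if_common_step:
  assumes "w \<in> V" "c \<in> V" "d \<in> V" "t \<in> seg w c" "t \<in> seg w d" "t \<noteq> w"
  shows "w \<notin> seg c d"
proof -
  have tV: "t \<in> V" using assms(1,2,4) seg_subset by blast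
  have "w \<notin> seg t c" "w \<notin> seg t d" using not_in_seg_beyond assms by auto
  then show ?thesis using not_in_seg_trans[OF assms(2) tV assms(3)] seg_commute[OF tV assms(2)] by auto
qed

lemma disjoint_paths_regroup:
  assumes V: "a \<in> V" "b \<in> V" "p \<in> V" "q \<in> V" and w: "w \<in> seg a b" "w \<in> seg p q" "w \<notin> {a,b,p,q}"
    and disj: "disjoint_paths a b p q"
  shows "disjoint_paths a p b q"
proof -
  have wV: "w \<in> V" using w(1) seg_subset V by blast
  have cross: "w \<in> seg c d" if "c \<in> {a,b}" "d \<in> {p,q}" for c d
  proof (rule ccontr)
    assume "w \<notin> seg c d"
    moreover have "c \<in> V" "d \<in> V" "c \<noteq> w" "d \<noteq> w" using that V w(3) by auto
    ultimately obtain n where n: "n \<in> nbrs w" "n \<in> seg w c" "n \<in> seg w d"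
      using common_first_step wV by metis
    have "seg w c \<subseteq> seg a b" "seg w d \<subseteq> seg p q"
      using that seg_mono[OF V(1,2) w(1)] seg_mono[OF V(3,4) w(2)] seg_commute[OF V(1) wV]
        seg_commute[OF V(3) wV] by auto
    then have "{w,n} \<subseteq> seg a b" "{w,n} \<subseteq> seg p q"
      using n ends_in_seg(1)[OF wV] \<open>c \<in> V\<close> \<open>d \<in> V\<close> by auto
    moreover have "{w,n} \<in> E" using n(1) unfolding nbrs_def by simp
    ultimately show False using disj unfolding disjoint_paths_def by blast
  qed
  show ?thesis
    unfolding disjoint_paths_def
  proof (intro ballI notI)
    fix e assume e: "e \<in> E" "e \<subseteq> seg a p \<and> e \<subseteq> seg b q"
    obtain s s' where "e = {s,s'}" "s \<noteq> s'" using edgeE[OF e(1)] by blast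
    then obtain t where t: "t \<in> e" "t \<noteq> w" by blast
    have "t \<in> seg w a \<or> t \<in> seg w p" "t \<in> seg w b \<or> t \<in> seg w q"
      using e t seg_split(1)[OF V(1,3) cross[of a p]] seg_split(1)[OF V(2,4) cross[of b q]]
        seg_commute[OF V(1) wV] seg_commute[OF V(2) wV] by auto
    then show False
      using not_in_seg_if_common_step[OF wV _ _ _ _ t(2)] cross V w(1,2) by blast
  qed
qed

lemma disjoint_paths_off_seg:
  assumes V: "a \<in> V" "b \<in> V" "p \<in> V" "q \<in> V" and w: "w \<notin> seg a b" "w \<in> seg a p" "w \<in> seg a q"
    "w \<in> seg p q" "w \<noteq> a" "w \<noteq> b"
  shows "disjoint_paths a b p q" "\<not> disjoint_paths a p b q"
proof -
  have wV: "w \<in> V" using w(2) seg_subset V by blast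
  show "disjoint_paths a b p q"
    unfolding disjoint_paths_def
  proof (intro ballI notI)
    fix e assume e: "e \<in> E" "e \<subseteq> seg a b \<and> e \<subseteq> seg p q"
    obtain t where t: "t \<in> e" using edgeE[OF e(1)] by blast
    have tV: "t \<in> V" "t \<noteq> w" using t e w(1) seg_subset[OF V(1,2)] by auto
    have "w \<notin> seg a t" using seg_mono(1)[OF V(1,2)] t e w(1) by blast
    moreover have "t \<in> seg w p \<or> t \<in> seg w q"
      using seg_split(1)[OF V(3,4) w(4)] seg_commute[OF V(3) wV] t e by auto
    then have "w \<notin> seg t p \<or> w \<notin> seg t q"
      using not_in_seg_beyond[OF wV] V tV(2) by blast
    ultimately show False using not_in_seg_trans[OF V(1) tV(1)] V(3,4) w(2,3) by blast
  qed
  obtain n where n: "n \<in> nbrs w" "n \<in> seg w a" "n \<in> seg w b"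
    using common_first_step[OF wV V(1,2)] w by metis
  have "w \<in> seg b q" using not_in_seg_trans[OF V(1,2,4)] w(1,3) by blast
  then have "{w,n} \<subseteq> seg a p" "{w,n} \<subseteq> seg b q"
    using n w(2) seg_mono[OF V(1,3) w(2)] seg_mono[OF V(2,4)] seg_commute[OF V(1) wV]
      seg_commute[OF V(2) wV] by auto
  moreover have "{w,n} \<in> E" using n(1) unfolding nbrs_def by simp
  ultimately show "\<not> disjoint_paths a p b q" unfolding disjoint_paths_def by blast
qed

end

text \<open>
  With D the edge-disjointness of paths, this decides whether the median of x, y, z avoids the
  path a-b; it refers to D only on quartets of leaves, which the matroid determines.
\<close>

definition misses_median :: "('v \<Rightarrow> 'v \<Rightarrow> 'v \<Rightarrow> 'v \<Rightarrow> bool) \<Rightarrow> 'v \<Rightarrow> 'v \<Rightarrow> 'v \<Rightarrow> 'v \<Rightarrow> 'v \<Rightarrow> bool" where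
  "misses_median D x y z a b \<longleftrightarrow> (\<exists>p q. p \<in> {x,y,z} \<and> q \<in> {x,y,z} \<and> p \<noteq> q \<and> distinct [a,b,p,q] \<and>
      D a b p q \<and> \<not> D a p b q)"

context X_tree
begin

lemma in_seg_iff_not_misses_median:
  assumes xyz: "x \<in> X" "y \<in> X" "z \<in> X" "distinct [x,y,z]" and w: "median w x y z"
    and ab: "a \<in> X" "b \<in> X" "a \<noteq> b"
  shows "w \<in> seg a b \<longleftrightarrow> \<not> misses_median disjoint_paths x y z a b"
proof -
  have V: "x \<in> V" "y \<in> V" "z \<in> V" "a \<in> V" "b \<in> V" using xyz ab X_subset_V by auto
  have wX: "w \<notin> X" using median_not_leaf[OF xyz w] .
  show ?thesis
  proof
    assume wab: "w \<in> seg a b"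
    show "\<not> misses_median disjoint_paths x y z a b"
    proof
      assume "misses_median disjoint_paths x y z a b"
      then obtain p q where pq: "p \<in> {x,y,z}" "q \<in> {x,y,z}" "p \<noteq> q"
        "disjoint_paths a b p q" "\<not> disjoint_paths a p b q" unfolding misses_median_def by blast
      have "p \<in> V" "q \<in> V" "w \<notin> {a,b,p,q}" using pq V xyz ab wX by auto
      then show False
        using disjoint_paths_regroup[OF V(4,5) _ _ wab median_in_seg[OF V(1-3) w pq(1-3)] _ pq(4)] pq(5)
        by blast
    qed
  next
    assume not_misses: "\<not> misses_median disjoint_paths x y z a b"
    show "w \<in> seg a b"
    proof (rule ccontr)
      assume wab: "w \<notin> seg a b"
      obtain p q where pq: "p \<in> {x,y,z}" "q \<in> {x,y,z}" "p \<noteq> q" "w \<in> seg a p" "w \<in> seg a q"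
        using median_on_two_paths[OF V(1-3) xyz(4) w V(4)] .
      have pV: "p \<in> V" "q \<in> V" using pq V by auto
      have "w \<noteq> a" "w \<noteq> b" using wX ab by auto
      moreover have "distinct [a,b,p,q]"
        using pq wab ab seg_refl[OF V(4)] \<open>w \<noteq> a\<close> by auto
      ultimately have "misses_median disjoint_paths x y z a b"
        using disjoint_paths_off_seg[OF V(4,5) pV wab pq(4,5) median_in_seg[OF V(1-3) w pq(1-3)]] pq(1-3)
        unfolding misses_median_def by blast
      then show False using not_misses by blast
    qed
  qed
qed

lemma through_median:
  assumes "x \<in> X" "y \<in> X" "z \<in> X" "distinct [x,y,z]" "median w x y z"
  shows "through w = {(a,b). a \<in> X \<and> b \<in> X \<and> a \<noteq> b \<and> \<not> misses_median disjoint_paths x y z a b}"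
proof -
  have "w \<notin> seg a a" if "a \<in> X" for a
    using median_not_leaf[OF assms] seg_refl X_subset_V that by auto
  then show ?thesis
    using in_seg_iff_not_misses_median[OF assms] unfolding through_def by blast
qed

end

section \<open>Recovering the tree from its matroid\<close>

lemma disjoint_paths_eq_if_M_indep_eq:
  assumes T1: "X_tree X V1 E1" and T2: "X_tree X V2 E2" and M: "M_indep X V1 E1 = M_indep X V2 E2"
    and "a \<in> X" "b \<in> X" "c \<in> X" "d \<in> X" "distinct [a,b,c,d]"
  shows "X_tree.disjoint_paths V1 E1 a b c d \<longleftrightarrow> X_tree.disjoint_paths V2 E2 a b c d"
proof -
  have "{{a,c},{b,d},{a,d},{b,c}} \<subseteq> cords X" using assms(4-8) unfolding cords_def by auto
  then have "lin_indep_cords V1 E1 {{a,c},{b,d},{a,d},{b,c}} \<longleftrightarrow> lin_indep_cords V2 E2 {{a,c},{b,d},{a,d},{b,c}}"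
    using M unfolding M_indep_def by blast
  then show ?thesis
    using X_tree.quartet_indep_iff[OF T1 assms(4-8)] X_tree.quartet_indep_iff[OF T2 assms(4-8)] by blast
qed

lemma misses_median_eq_if_M_indep_eq:
  assumes T1: "X_tree X V1 E1" and T2: "X_tree X V2 E2" and M: "M_indep X V1 E1 = M_indep X V2 E2"
    and "x \<in> X" "y \<in> X" "z \<in> X" "a \<in> X" "b \<in> X"
  shows "misses_median (X_tree.disjoint_paths V1 E1) x y z a b \<longleftrightarrow>
    misses_median (X_tree.disjoint_paths V2 E2) x y z a b"
proof -
  have eq: "X_tree.disjoint_paths V1 E1 a b p q = X_tree.disjoint_paths V2 E2 a b p q \<and>
      X_tree.disjoint_paths V1 E1 a p b q = X_tree.disjoint_paths V2 E2 a p b q"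
    if "p \<in> {x,y,z}" "q \<in> {x,y,z}" "distinct [a,b,p,q]" for p q
  proof -
    have "p \<in> X" "q \<in> X" "distinct [a,p,b,q]" using that assms(4-6) by auto
    then show ?thesis using disjoint_paths_eq_if_M_indep_eq[OF T1 T2 M] assms(7,8) that(3) by blast
  qed
  show ?thesis unfolding misses_median_def using eq by blast
qed

lemma through_correspondence:
  assumes T1: "X_tree X V1 E1" and T2: "X_tree X V2 E2" and M: "M_indep X V1 E1 = M_indep X V2 E2"
    and v: "v \<in> V1"
  obtains w where "w \<in> V2" "X_tree.through X V2 E2 w = X_tree.through X V1 E1 v"
proof -
  interpret A: X_tree X V1 E1 by fact
  interpret B: X_tree X V2 E2 by fact
  show ?thesis
  proof (cases "v \<in> X")
    case True
    then have "v \<in> V2" "B.through v = A.through v"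
      using B.X_subset_V A.through_leaf B.through_leaf by auto
    then show ?thesis by (rule that)
  next
    case False
    obtain x y z where xyz: "x \<in> X" "y \<in> X" "z \<in> X" "distinct [x,y,z]" and v: "A.median v x y z"
      using A.internal_vertex_median[OF v False] .
    have V2: "x \<in> V2" "y \<in> V2" "z \<in> V2" using xyz B.X_subset_V by auto
    obtain m where m: "B.median m x y z" using B.median_exists[OF V2] unfolding B.median_def by blast
    have "m \<in> V2" using m B.seg_subset[OF V2(1,2)] unfolding B.median_def by blast
    have "misses_median B.disjoint_paths x y z a b \<longleftrightarrow> misses_median A.disjoint_paths x y z a b"
      if "a \<in> X" "b \<in> X" for a b
      using misses_median_eq_if_M_indep_eq[OF T2 T1 M[symmetric] xyz(1-3) that] .
    then have "B.through m = A.through v"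
      unfolding A.through_median[OF xyz v] B.through_median[OF xyz m] by blast
    then show ?thesis using that \<open>m \<in> V2\<close> by blast
  qed
qed

lemma through_bijection:
  assumes T1: "X_tree X V1 E1" and T2: "X_tree X V2 E2" and M: "M_indep X V1 E1 = M_indep X V2 E2"
  obtains f where "bij_betw f V1 V2" "\<And>v. v \<in> V1 \<Longrightarrow> X_tree.through X V2 E2 (f v) = X_tree.through X V1 E1 v"
proof -
  interpret A: X_tree X V1 E1 by fact
  interpret B: X_tree X V2 E2 by fact
  define f where "f v = (SOME w. w \<in> V2 \<and> B.through w = A.through v)" for v
  have f: "f v \<in> V2 \<and> B.through (f v) = A.through v" if "v \<in> V1" for v
  proof -
    have "\<exists>w. w \<in> V2 \<and> B.through w = A.through v"
      using through_correspondence[OF T1 T2 M that] by blast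
    then show ?thesis unfolding f_def by (rule someI_ex)
  qed
  have "inj_on f V1"
  proof (rule inj_onI)
    fix u v assume "u \<in> V1" "v \<in> V1" "f u = f v"
    then have "A.through u = A.through v" using f by metis
    then show "u = v" using A.through_inj \<open>u \<in> V1\<close> \<open>v \<in> V1\<close> by blast
  qed
  moreover have "f ` V1 = V2"
  proof (intro subset_antisym subsetI)
    fix w assume w: "w \<in> V2"
    obtain v where v: "v \<in> V1" "A.through v = B.through w"
      using through_correspondence[OF T2 T1 M[symmetric] w] by blast
    then have "B.through (f v) = B.through w" using f[OF v(1)] by simp
    then have "f v = w" using B.through_inj f[OF v(1)] w by blast
    then show "w \<in> f ` V1" using v(1) by blast
  qed (use f in blast)
  ultimately show ?thesis using that f unfolding bij_betw_def by blast
qed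

lemma X_isomorphism_if_preserves_through:
  assumes T1: "X_tree X V1 E1" and T2: "X_tree X V2 E2" and f: "bij_betw f V1 V2"
    and through: "\<And>v. v \<in> V1 \<Longrightarrow> X_tree.through X V2 E2 (f v) = X_tree.through X V1 E1 v"
  shows "X_isomorphism X V1 E1 V2 E2 f"
proof -
  interpret A: X_tree X V1 E1 by fact
  interpret B: X_tree X V2 E2 by fact
  have inj: "f w = f u \<longleftrightarrow> w = u" if "w \<in> V1" "u \<in> V1" for w u
    using bij_betw_imp_inj_on[OF f] that by (auto dest: inj_onD)
  have "{u,v} \<in> E1 \<longleftrightarrow> {f u, f v} \<in> E2" if uv: "u \<in> V1" "v \<in> V1" for u v
  proof -
    have fuv: "f u \<in> V2" "f v \<in> V2" using bij_betw_apply[OF f] uv by auto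
    have "{f u, f v} \<in> E2 \<longleftrightarrow> f u \<noteq> f v \<and>
        (\<forall>w'\<in>V2. B.through (f u) \<inter> B.through (f v) \<subseteq> B.through w' \<longrightarrow> w' = f u \<or> w' = f v)"
      using B.edge_iff_through[OF fuv] .
    also have "\<dots> \<longleftrightarrow> f u \<noteq> f v \<and>
        (\<forall>w\<in>V1. B.through (f u) \<inter> B.through (f v) \<subseteq> B.through (f w) \<longrightarrow> f w = f u \<or> f w = f v)"
      using bij_betw_imp_surj_on[OF f] by blast
    also have "\<dots> \<longleftrightarrow> u \<noteq> v \<and> (\<forall>w\<in>V1. A.through u \<inter> A.through v \<subseteq> A.through w \<longrightarrow> w = u \<or> w = v)"
      using through uv inj by auto
    also have "\<dots> \<longleftrightarrow> {u,v} \<in> E1" using A.edge_iff_through[OF uv] by simp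
    finally show ?thesis by simp
  qed
  moreover have "f x = x" if x: "x \<in> X" for x
  proof -
    have "x \<in> V1" "x \<in> V2" using x A.X_subset_V B.X_subset_V by auto
    then have "B.through (f x) = B.through x"
      using through A.through_leaf[OF x] B.through_leaf[OF x] by simp
    then show ?thesis using B.through_inj bij_betw_apply[OF f \<open>x \<in> V1\<close>] \<open>x \<in> V2\<close> by blast
  qed
  ultimately show ?thesis unfolding X_isomorphism_def using f by blast
qed

theorem mainTheorem8:
  fixes X V1 V2 :: "'v set" and E1 E2 :: "'v set set"
  assumes "finite X" and "card X \<ge> 3"
    and "is_X_tree X V1 E1" and "is_X_tree X V2 E2"
  shows "M_indep X V1 E1 = M_indep X V2 E2 \<longleftrightarrow> X_iso X V1 E1 V2 E2"
proof -
  have T1: "X_tree X V1 E1" and T2: "X_tree X V2 E2" using assms by (auto simp: X_tree_def)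
  show ?thesis
  proof
    assume "M_indep X V1 E1 = M_indep X V2 E2"
    then obtain f where "bij_betw f V1 V2"
      "\<And>v. v \<in> V1 \<Longrightarrow> X_tree.through X V2 E2 (f v) = X_tree.through X V1 E1 v"
      using through_bijection[OF T1 T2] by metis
    then show "X_iso X V1 E1 V2 E2"
      unfolding X_iso_iff using X_isomorphism_if_preserves_through[OF T1 T2] by blast
  next
    assume "X_iso X V1 E1 V2 E2"
    then show "M_indep X V1 E1 = M_indep X V2 E2" using M_indep_X_iso X_tree.X_subset_V[OF T1] by blast
  qed
qed

end
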